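(* Let $A=\mathrm{diag}(G_1,\dots,G_m,[1])\in\mathbb{R}^{n\times n}$ (where the trailing $1\times 1$ block $[1]$ may or may not be present), with $G_j=\begin{bmatrix}c_j&s_j\\-s_j&c_j\end{bmatrix}$, $c_j^2+s_j^2=1$, $s_j\neq 0$, and $0<c_1<c_2<\cdots<c_m$. Let $v_0\in\mathbb{R}^n$ be a unit norm vector with $d(A,v_0)\geq 2$, and consider the iteration ACI($1$): $$\widetilde w_k=(A-\alpha_kI)v_k,\ \alpha_k=v_k^TAv_k,\quad w_k=\widetilde w_k/\|\widetilde w_k\|,\quad \widetilde v_{k+1}=(A^T-\beta_kI)w_k,\ \beta_k=w_k^TAw_k,\quad v_{k+1}=\widetilde v_{k+1}/\|\widetilde v_{k+1}\|.$$ Then the sequences $\{\alpha_k\}$ and $\{\beta_k\}$ converge to limits $\alpha$ and $\beta$ with $\alpha=\beta$, this common value is the real part of an eigenvalue of $A$ (namely $\alpha=\beta=c_j$ for some $j\in\{1,\dots,m\}$), and every limit vector $v_*$ of the sequence $\{v_k\}$ satisfies $d(A,v_* )=2$.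
   Context: $d(A,v)$ denotes the grade of $v$ w.r.t. $A$, i.e. the degree of the monic polynomial $p$ of smallest degree with $p(A)v=0$. $\|\cdot\|$ is the Euclidean norm. $A$ is orthogonal; under the hypotheses all vectors $\widetilde w_k,\widetilde v_{k+1}$ are nonzero. *)

theory Defs
  imports Complex_Main "HOL-Computational_Algebra.Polynomial"
begin

text \<open>Vectors in R^n are represented as functions nat => real, only indices i < n matter;
  n x n matrices as functions nat => nat => real.\<close>

definition dimA :: "nat \<Rightarrow> bool \<Rightarrow> nat" where
  "dimA m t = 2 * m + (if t then 1 else 0)"

text \<open>A = diag(G_0,...,G_{m-1},[1]) (trailing block present iff t), with
  G_j = [[c j, s j], [- s j, c j]]; entries outside the n x n range are 0.\<close>
definition rotA :: "nat \<Rightarrow> bool \<Rightarrow> (nat \<Rightarrow> real) \<Rightarrow> (nat \<Rightarrow> real) \<Rightarrow> nat \<Rightarrow> nat \<Rightarrow> real" where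
  "rotA m t c s i j =
     (if i < 2 * m \<and> j < 2 * m \<and> i div 2 = j div 2 then
        (if i = j then c (i div 2)
         else if even i then s (i div 2) else - s (i div 2))
      else if t \<and> i = 2 * m \<and> j = 2 * m then 1 else 0)"

definition mvec :: "nat \<Rightarrow> (nat \<Rightarrow> nat \<Rightarrow> real) \<Rightarrow> (nat \<Rightarrow> real) \<Rightarrow> nat \<Rightarrow> real" where
  "mvec n M x = (\<lambda>i. \<Sum>j<n. M i j * x j)"

definition mtrans :: "(nat \<Rightarrow> nat \<Rightarrow> real) \<Rightarrow> nat \<Rightarrow> nat \<Rightarrow> real" where
  "mtrans M = (\<lambda>i j. M j i)"

definition vinner :: "nat \<Rightarrow> (nat \<Rightarrow> real) \<Rightarrow> (nat \<Rightarrow> real) \<Rightarrow> real" where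
  "vinner n x y = (\<Sum>i<n. x i * y i)"

definition vnorm :: "nat \<Rightarrow> (nat \<Rightarrow> real) \<Rightarrow> real" where
  "vnorm n x = sqrt (vinner n x x)"

definition poly_mvec :: "nat \<Rightarrow> real poly \<Rightarrow> (nat \<Rightarrow> nat \<Rightarrow> real) \<Rightarrow> (nat \<Rightarrow> real) \<Rightarrow> nat \<Rightarrow> real" where
  "poly_mvec n p M x = (\<lambda>i. \<Sum>k\<le>degree p. coeff p k * ((mvec n M ^^ k) x) i)"

definition grade :: "nat \<Rightarrow> (nat \<Rightarrow> nat \<Rightarrow> real) \<Rightarrow> (nat \<Rightarrow> real) \<Rightarrow> nat" where
  "grade n M x = (LEAST d. \<exists>p. lead_coeff p = 1 \<and> degree p = d \<and>
                        (\<forall>i<n. poly_mvec n p M x i = 0))"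

primrec aci :: "nat \<Rightarrow> (nat \<Rightarrow> nat \<Rightarrow> real) \<Rightarrow> (nat \<Rightarrow> real) \<Rightarrow> nat \<Rightarrow> (nat \<Rightarrow> real) \<times> (nat \<Rightarrow> real)" where
  "aci n M v0 0 =
     (let v = v0; al = vinner n v (mvec n M v);
          wt = (\<lambda>i. mvec n M v i - al * v i)
      in (v, (\<lambda>i. wt i / vnorm n wt)))"
| "aci n M v0 (Suc k) =
     (let w = snd (aci n M v0 k); be = vinner n w (mvec n M w);
          vt = (\<lambda>i. mvec n (mtrans M) w i - be * w i);
          v = (\<lambda>i. vt i / vnorm n vt);
          al = vinner n v (mvec n M v);
          wt = (\<lambda>i. mvec n M v i - al * v i)
      in (v, (\<lambda>i. wt i / vnorm n wt)))"

definition aci_v where "aci_v n M v0 k = fst (aci n M v0 k)"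
definition aci_w where "aci_w n M v0 k = snd (aci n M v0 k)"
definition aci_alpha where "aci_alpha n M v0 k = vinner n (aci_v n M v0 k) (mvec n M (aci_v n M v0 k))"
definition aci_beta where "aci_beta n M v0 k = vinner n (aci_w n M v0 k) (mvec n M (aci_w n M v0 k))"

end

theory Submission
  imports Defs
begin

text \<open>Split \<open>\<real>\<^sup>n\<close> into the planes of the blocks \<open>G\<^sub>j\<close> and the trailing line, and let \<open>p\<^sub>j\<close>
  be the energy of a unit vector in block \<open>j\<close>. The eigenvalues \<open>c\<^sub>j \<plusminus> i s\<^sub>j\<close> of \<open>G\<^sub>j\<close> lie on the
  unit circle, so both \<open>A - a I\<close> and \<open>A\<^sup>T - a I\<close> multiply the energy of block \<open>j\<close> by
  \<open>|c\<^sub>j \<plusminus> i s\<^sub>j - a|\<^sup>2 = 1 + a\<^sup>2 - 2 a c\<^sub>j\<close>, while the Rayleigh quotient is \<open>a = \<Sum> c\<^sub>j p\<^sub>j\<close>.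
  Hence every half step of ACI(1) is the reweighting \<open>p\<^sub>j \<mapsto> (1 + a\<^sup>2 - 2 a c\<^sub>j) p\<^sub>j / \<Sum>\<close>.
  As \<open>a \<ge> c\<^sub>1 > 0\<close>, the factor strictly decreases in \<open>c\<^sub>j\<close>, so for the first block \<open>j\<^sub>0\<close> carrying
  energy (it exists because \<open>d(A,v\<^sub>0) \<ge> 2\<close>) each ratio \<open>p\<^sub>j / p\<^sub>j\<^sub>0\<close> decays geometrically. The
  energy concentrates on block \<open>j\<^sub>0\<close>, so \<open>\<alpha>\<^sub>k, \<beta>\<^sub>k \<rightarrow> c\<^sub>j\<^sub>0\<close>, and every limit vector lies in the
  plane of \<open>G\<^sub>j\<^sub>0\<close>, where it has grade 2 because \<open>s\<^sub>j\<^sub>0 \<noteq> 0\<close>.\<close>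

section \<open>Matrix--vector products with the block rotation matrix\<close>

lemma sum_lessThan_dimA:
  "(\<Sum>i<dimA m t. g i) = (\<Sum>j<m. g (2*j) + g (Suc (2*j))) + (if t then g (2*m) else (0::'a::comm_monoid_add))"
proof -
  have "(\<Sum>i<2*m. g i) = (\<Sum>j<m. g (2*j) + g (Suc (2*j)))"
    by (induction m) (simp_all add: lessThan_Suc add_ac)
  then show ?thesis
    by (simp add: dimA_def lessThan_Suc add.commute)
qed

lemma mvec_eq_pair:
  assumes "a < n" "b < n" "a \<noteq> b" "\<And>l. l < n \<Longrightarrow> l \<noteq> a \<Longrightarrow> l \<noteq> b \<Longrightarrow> M i l = 0"
  shows "mvec n M x i = M i a * x a + M i b * x b"
proof -
  have "mvec n M x i = (\<Sum>l\<in>{a, b}. M i l * x l)"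
    unfolding mvec_def by (rule sum.mono_neutral_right) (use assms in auto)
  then show ?thesis
    using assms(3) by simp
qed

lemma mvec_eq_single:
  assumes "a < n" "\<And>l. l < n \<Longrightarrow> l \<noteq> a \<Longrightarrow> M i l = 0"
  shows "mvec n M x i = M i a * x a"
proof -
  have "mvec n M x i = (\<Sum>l\<in>{a}. M i l * x l)"
    unfolding mvec_def by (rule sum.mono_neutral_right) (use assms in auto)
  then show ?thesis
    by simp
qed

lemma mvec_rotA_even:
  "j < m \<Longrightarrow> mvec (dimA m t) (rotA m t c s) x (2*j) = c j * x (2*j) + s j * x (Suc (2*j))"
  by (subst mvec_eq_pair[of "2*j" _ "Suc (2*j)"]) (auto simp: dimA_def rotA_def)

lemma mvec_rotA_odd:
  "j < m \<Longrightarrow> mvec (dimA m t) (rotA m t c s) x (Suc (2*j)) = - s j * x (2*j) + c j * x (Suc (2*j))"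
  by (subst mvec_eq_pair[of "2*j" _ "Suc (2*j)"]) (auto simp: dimA_def rotA_def)

lemma mvec_rotA_last:
  "t \<Longrightarrow> mvec (dimA m t) (rotA m t c s) x (2*m) = x (2*m)"
  by (subst mvec_eq_single[of "2*m"]) (auto simp: dimA_def rotA_def)

lemma mvec_rotA_trans_even:
  "j < m \<Longrightarrow> mvec (dimA m t) (mtrans (rotA m t c s)) x (2*j) = c j * x (2*j) - s j * x (Suc (2*j))"
  by (subst mvec_eq_pair[of "2*j" _ "Suc (2*j)"]) (auto simp: dimA_def rotA_def mtrans_def)

lemma mvec_rotA_trans_odd:
  "j < m \<Longrightarrow> mvec (dimA m t) (mtrans (rotA m t c s)) x (Suc (2*j)) = s j * x (2*j) + c j * x (Suc (2*j))"
  by (subst mvec_eq_pair[of "2*j" _ "Suc (2*j)"]) (auto simp: dimA_def rotA_def mtrans_def)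

lemma mvec_rotA_trans_last:
  "t \<Longrightarrow> mvec (dimA m t) (mtrans (rotA m t c s)) x (2*m) = x (2*m)"
  by (subst mvec_eq_single[of "2*m"]) (auto simp: dimA_def rotA_def mtrans_def)

lemma dimA_indexE:
  assumes "i < dimA m t"
  obtains j where "j < m" "i = 2*j" | j where "j < m" "i = Suc (2*j)" | "t" "i = 2*m"
proof (cases "even i")
  case True
  then obtain j where "i = 2*j" by (auto elim: evenE)
  then show ?thesis using assms that by (cases t) (auto simp: dimA_def less_Suc_eq)
next
  case False
  then obtain j where "i = Suc (2*j)" by (metis oddE Suc_eq_plus1)
  then show ?thesis using assms that by (cases t) (auto simp: dimA_def less_Suc_eq)
qed

section \<open>Grade\<close>

lemma poly_mvec_degree_le_2:
  assumes "degree p \<le> 2"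
  shows "poly_mvec n p M x i = coeff p 0 * x i + coeff p 1 * mvec n M x i + coeff p 2 * mvec n M (mvec n M x) i"
proof -
  have "poly_mvec n p M x i = (\<Sum>k\<le>2. coeff p k * ((mvec n M ^^ k) x) i)"
    unfolding poly_mvec_def by (rule sum.mono_neutral_left) (use assms in \<open>auto simp: coeff_eq_0\<close>)
  then show ?thesis
    by (simp add: numeral_2_eq_2)
qed

lemma coeff_pCons_2: "coeff (pCons a p) 2 = coeff p 1"
  by (simp add: numeral_2_eq_2)

definition annihilates :: "nat \<Rightarrow> real poly \<Rightarrow> (nat \<Rightarrow> nat \<Rightarrow> real) \<Rightarrow> (nat \<Rightarrow> real) \<Rightarrow> bool" where
  "annihilates n p M x \<longleftrightarrow> (\<forall>i<n. poly_mvec n p M x i = 0)"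

lemma grade_le:
  "lead_coeff p = 1 \<Longrightarrow> annihilates n p M x \<Longrightarrow> grade n M x \<le> degree p"
  unfolding grade_def annihilates_def by (rule Least_le) blast

lemma grade_eqI:
  assumes "lead_coeff p = 1" "annihilates n p M x"
    and "\<And>q. lead_coeff q = 1 \<Longrightarrow> degree q < degree p \<Longrightarrow> \<not> annihilates n q M x"
  shows "grade n M x = degree p"
  unfolding grade_def using assms unfolding annihilates_def
  by (intro Least_equality) (blast, metis not_less)

section \<open>Reweighting of energy distributions\<close>

definition shift_gain :: "real \<Rightarrow> real \<Rightarrow> real" where
  "shift_gain a x = 1 + a\<^sup>2 - 2 * a * x"

lemma shift_gain_eq: "shift_gain a x = (a - x)\<^sup>2 + (1 - x\<^sup>2)"
  by (simp add: shift_gain_def power2_eq_square algebra_simps)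

lemma shift_gain_nonneg: "\<bar>x\<bar> \<le> 1 \<Longrightarrow> 0 \<le> shift_gain a x"
  unfolding shift_gain_eq using abs_square_le_1[of x] by (smt (verit) zero_le_power2)

lemma shift_gain_pos: "\<bar>x\<bar> < 1 \<Longrightarrow> 0 < shift_gain a x"
  unfolding shift_gain_eq using abs_square_less_1[of x] by (smt (verit) zero_le_power2)

lemma shift_gain_le_2:
  assumes "0 \<le> a" "a \<le> 1" "0 \<le> x"
  shows "shift_gain a x \<le> 2"
proof -
  from assms have "a * a \<le> 1" "0 \<le> a * x"
    by (simp_all add: mult_le_one)
  then show ?thesis
    by (simp add: shift_gain_def power2_eq_square)
qed

definition weighted_mean :: "nat \<Rightarrow> (nat \<Rightarrow> real) \<Rightarrow> (nat \<Rightarrow> real) \<Rightarrow> real" where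
  "weighted_mean m \<gamma> p = (\<Sum>j\<le>m. \<gamma> j * p j)"

definition reweight :: "nat \<Rightarrow> (nat \<Rightarrow> real) \<Rightarrow> (nat \<Rightarrow> real) \<Rightarrow> nat \<Rightarrow> real" where
  "reweight m \<gamma> p j =
     shift_gain (weighted_mean m \<gamma> p) (\<gamma> j) * p j /
     (\<Sum>l\<le>m. shift_gain (weighted_mean m \<gamma> p) (\<gamma> l) * p l)"

lemma weighted_mean_tendsto:
  assumes "j0 \<le> m" "\<And>j. j \<le> m \<Longrightarrow> (\<lambda>i. P i j) \<longlonglongrightarrow> (if j = j0 then 1 else 0)"
  shows "(\<lambda>i. weighted_mean m \<gamma> (P i)) \<longlonglongrightarrow> \<gamma> j0"
proof -
  have "(\<lambda>i. \<Sum>j\<le>m. \<gamma> j * P i j) \<longlonglongrightarrow> (\<Sum>j\<le>m. \<gamma> j * (if j = j0 then 1 else 0))"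
    by (intro tendsto_sum tendsto_mult tendsto_const) (use assms in auto)
  also have "(\<Sum>j\<le>m. \<gamma> j * (if j = j0 then 1 else 0)) = \<gamma> j0"
    using assms(1) by (simp add: if_distrib cong: if_cong)
  finally show ?thesis
    unfolding weighted_mean_def .
qed

locale reweighting =
  fixes m :: nat and \<gamma> :: "nat \<Rightarrow> real"
  assumes \<gamma>_pos: "0 < \<gamma> 0"
    and \<gamma>_strict_mono: "\<And>i j. i < j \<Longrightarrow> j \<le> m \<Longrightarrow> \<gamma> i < \<gamma> j"
    and \<gamma>_le_1: "\<gamma> m \<le> 1"
begin

lemma \<gamma>_range: "j \<le> m \<Longrightarrow> \<gamma> 0 \<le> \<gamma> j \<and> \<gamma> j \<le> 1"
  using \<gamma>_strict_mono[of 0 j] \<gamma>_strict_mono[of j m] \<gamma>_le_1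
  by (cases "j = 0"; cases "j = m") auto

lemma \<gamma>_lt_1: "j < m \<Longrightarrow> \<gamma> j < 1"
  using \<gamma>_strict_mono[of j m] \<gamma>_le_1 by simp

definition supported_from :: "nat \<Rightarrow> (nat \<Rightarrow> real) \<Rightarrow> bool" where
  "supported_from j0 p \<longleftrightarrow>
     (\<forall>j\<le>m. 0 \<le> p j) \<and> (\<Sum>j\<le>m. p j) = 1 \<and> 0 < p j0 \<and> (\<forall>j<j0. p j = 0)"

definition decay :: "nat \<Rightarrow> nat \<Rightarrow> real" where
  "decay j0 j = 1 - \<gamma> 0 * (\<gamma> j - \<gamma> j0)"

lemma decay_bounds:
  assumes "j0 < j" "j \<le> m"
  shows "0 \<le> decay j0 j" "decay j0 j < 1"
proof -
  have "\<gamma> 0 * (\<gamma> j - \<gamma> j0) \<le> 1 * 1"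
    using \<gamma>_range[of j] \<gamma>_range[of j0] \<gamma>_strict_mono[OF assms] \<gamma>_pos assms
    by (intro mult_mono) auto
  then show "0 \<le> decay j0 j"
    by (simp add: decay_def)
  show "decay j0 j < 1"
    using \<gamma>_strict_mono[OF assms] \<gamma>_pos by (simp add: decay_def)
qed

lemma weighted_mean_bounds:
  assumes "supported_from j0 p"
  shows "\<gamma> 0 \<le> weighted_mean m \<gamma> p" "weighted_mean m \<gamma> p \<le> 1"
proof -
  have "(\<Sum>j\<le>m. \<gamma> 0 * p j) \<le> weighted_mean m \<gamma> p"
    unfolding weighted_mean_def
    by (intro sum_mono mult_right_mono) (use assms \<gamma>_range in \<open>auto simp: supported_from_def\<close>)
  moreover have "weighted_mean m \<gamma> p \<le> (\<Sum>j\<le>m. 1 * p j)"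
    unfolding weighted_mean_def
    by (intro sum_mono mult_right_mono) (use assms \<gamma>_range in \<open>auto simp: supported_from_def\<close>)
  ultimately
  show "\<gamma> 0 \<le> weighted_mean m \<gamma> p" "weighted_mean m \<gamma> p \<le> 1"
    using assms by (simp_all add: supported_from_def sum_distrib_left[symmetric])
qed

lemma shift_gain_decay:
  assumes "\<gamma> 0 \<le> a" "a \<le> 1" "j0 < j" "j \<le> m"
  shows "shift_gain a (\<gamma> j) \<le> decay j0 j * shift_gain a (\<gamma> j0)"
proof -
  define D where "D = \<gamma> j - \<gamma> j0"
  have D: "0 \<le> D"
    using \<gamma>_strict_mono[of j0 j] assms by (simp add: D_def)
  have "\<gamma> 0 * D * shift_gain a (\<gamma> j0) \<le> a * D * 2"
    using assms D \<gamma>_pos \<gamma>_range[of j0] shift_gain_le_2[of a "\<gamma> j0"] shift_gain_nonneg[of "\<gamma> j0" a]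
    by (intro mult_mono) auto
  then show ?thesis
    by (simp add: decay_def D_def shift_gain_def algebra_simps)
qed

lemma reweight_normalizer_pos:
  assumes "supported_from j0 p" "j0 < m"
  shows "0 < (\<Sum>l\<le>m. shift_gain (weighted_mean m \<gamma> p) (\<gamma> l) * p l)"
proof -
  have nonneg: "0 \<le> shift_gain a (\<gamma> l) * p l" if "l \<le> m" for a l
    using assms that \<gamma>_range[of l] \<gamma>_pos
    by (auto simp: supported_from_def intro!: mult_nonneg_nonneg shift_gain_nonneg)
  have "0 < shift_gain (weighted_mean m \<gamma> p) (\<gamma> j0) * p j0"
    using assms \<gamma>_lt_1[of j0] \<gamma>_range[of j0] \<gamma>_pos
    by (auto simp: supported_from_def intro!: mult_pos_pos shift_gain_pos)
  also have "\<dots> \<le> (\<Sum>l\<le>m. shift_gain (weighted_mean m \<gamma> p) (\<gamma> l) * p l)"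
    by (rule member_le_sum) (use assms nonneg in auto)
  finally show ?thesis .
qed

lemma reweight_supported_from:
  assumes "supported_from j0 p" "j0 < m"
  shows "supported_from j0 (reweight m \<gamma> p)"
proof -
  define a where "a = weighted_mean m \<gamma> p"
  define S where "S = (\<Sum>l\<le>m. shift_gain a (\<gamma> l) * p l)"
  have S: "0 < S"
    using reweight_normalizer_pos[OF assms] by (simp add: S_def a_def)
  have q: "reweight m \<gamma> p j = shift_gain a (\<gamma> j) * p j / S" for j
    by (simp add: reweight_def S_def a_def)
  have "(\<Sum>j\<le>m. reweight m \<gamma> p j) = 1"
    using S by (simp add: q S_def sum_divide_distrib[symmetric])
  moreover have "0 \<le> reweight m \<gamma> p j" if "j \<le> m" for j
    using assms that S \<gamma>_range[of j] \<gamma>_pos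
    by (auto simp: q supported_from_def intro!: divide_nonneg_pos mult_nonneg_nonneg shift_gain_nonneg)
  moreover have "0 < reweight m \<gamma> p j0"
    using assms S \<gamma>_lt_1[of j0] \<gamma>_range[of j0] \<gamma>_pos
    by (auto simp: q supported_from_def intro!: divide_pos_pos mult_pos_pos shift_gain_pos)
  ultimately show ?thesis
    using assms by (simp add: supported_from_def q)
qed

lemma reweight_ratio_le:
  assumes "supported_from j0 p" "j0 < j" "j \<le> m"
  shows "reweight m \<gamma> p j / reweight m \<gamma> p j0 \<le> decay j0 j * (p j / p j0)"
proof -
  define a where "a = weighted_mean m \<gamma> p"
  have j0: "j0 < m"
    using assms by simp
  have pos: "0 < shift_gain a (\<gamma> j0)" "0 < p j0" "0 \<le> p j"
    using assms \<gamma>_lt_1[OF j0] \<gamma>_range[of j0] \<gamma>_pos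
    by (auto simp: supported_from_def intro: shift_gain_pos)
  have "reweight m \<gamma> p j / reweight m \<gamma> p j0 = shift_gain a (\<gamma> j) * p j / (shift_gain a (\<gamma> j0) * p j0)"
    using reweight_normalizer_pos[OF assms(1) j0] by (simp add: reweight_def a_def)
  also have "\<dots> \<le> decay j0 j * shift_gain a (\<gamma> j0) * p j / (shift_gain a (\<gamma> j0) * p j0)"
    using shift_gain_decay[OF weighted_mean_bounds[OF assms(1)] assms(2,3)] pos
    by (intro divide_right_mono mult_right_mono) (auto simp: a_def)
  also have "\<dots> = decay j0 j * (p j / p j0)"
    using pos by simp
  finally show ?thesis .
qed

context
  fixes P :: "nat \<Rightarrow> nat \<Rightarrow> real" and j0 :: nat
  assumes P_Suc: "\<And>i. P (Suc i) = reweight m \<gamma> (P i)"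
    and P_0: "supported_from j0 (P 0)"
    and j0: "j0 < m"
begin

lemma reweight_iterates_supported_from: "supported_from j0 (P i)"
  by (induction i) (simp_all add: P_0 P_Suc reweight_supported_from j0)

lemma reweight_iterates_ratio_le:
  assumes "j0 < j" "j \<le> m"
  shows "P i j / P i j0 \<le> decay j0 j ^ i * (P 0 j / P 0 j0)"
proof (induction i)
  case (Suc i)
  have "P (Suc i) j / P (Suc i) j0 \<le> decay j0 j * (P i j / P i j0)"
    unfolding P_Suc by (rule reweight_ratio_le[OF reweight_iterates_supported_from assms])
  also have "\<dots> \<le> decay j0 j * (decay j0 j ^ i * (P 0 j / P 0 j0))"
    using Suc decay_bounds[OF assms] by (intro mult_left_mono)
  finally show ?case
    by (simp add: mult.assoc)
qed simp

lemma reweight_iterates_vanish: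
  assumes "j0 < j" "j \<le> m"
  shows "(\<lambda>i. P i j) \<longlonglongrightarrow> 0"
proof (rule tendsto_sandwich[OF _ _ tendsto_const])
  have P: "0 \<le> P i j" "0 < P i j0" "P i j0 \<le> 1" for i
  proof -
    have "P i j0 \<le> (\<Sum>l\<le>m. P i l)"
      by (rule member_le_sum) (use reweight_iterates_supported_from j0 in \<open>auto simp: supported_from_def\<close>)
    then show "0 \<le> P i j" "0 < P i j0" "P i j0 \<le> 1"
      using reweight_iterates_supported_from[of i] assms by (auto simp: supported_from_def)
  qed
  have "P i j \<le> P i j / P i j0" for i
    using P[of i] by (simp add: le_divide_eq mult_left_le)
  then have "P i j \<le> decay j0 j ^ i * (P 0 j / P 0 j0)" for i
    using reweight_iterates_ratio_le[OF assms, of i] order_trans by blast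
  then show "\<forall>\<^sub>F i in sequentially. P i j \<le> decay j0 j ^ i * (P 0 j / P 0 j0)"
    by simp
  show "\<forall>\<^sub>F i in sequentially. 0 \<le> P i j"
    using P by simp
  show "(\<lambda>i. decay j0 j ^ i * (P 0 j / P 0 j0)) \<longlonglongrightarrow> 0"
    using decay_bounds[OF assms] by (intro tendsto_mult_left_zero LIMSEQ_power_zero) simp
qed

lemma reweight_iterates_tendsto:
  assumes "j \<le> m"
  shows "(\<lambda>i. P i j) \<longlonglongrightarrow> (if j = j0 then 1 else 0)"
proof -
  have vanish: "(\<lambda>i. P i l) \<longlonglongrightarrow> 0" if "l \<le> m" "l \<noteq> j0" for l
  proof (cases "l < j0")
    case True
    then show ?thesis
      using reweight_iterates_supported_from by (simp add: supported_from_def)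
  next
    case False
    then show ?thesis
      using reweight_iterates_vanish that by simp
  qed
  have "P i j0 = 1 - (\<Sum>l\<in>{..m} - {j0}. P i l)" for i
    using reweight_iterates_supported_from[of i] sum.remove[of "{..m}" j0 "P i"] j0
    by (simp add: supported_from_def)
  moreover have "(\<lambda>i. 1 - (\<Sum>l\<in>{..m} - {j0}. P i l)) \<longlonglongrightarrow> 1 - 0"
    by (intro tendsto_diff tendsto_const tendsto_null_sum) (use vanish in auto)
  ultimately show ?thesis
    using vanish assms by auto
qed

end

end

section \<open>Block energies of the ACI(1) iterates\<close>

lemma rotation_shift_sq:
  fixes c s x y a :: real
  assumes "c\<^sup>2 + s\<^sup>2 = 1"
  shows "(c * x + s * y - a * x)\<^sup>2 + (- s * x + c * y - a * y)\<^sup>2 = shift_gain a c * (x\<^sup>2 + y\<^sup>2)"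
  using assms unfolding shift_gain_def by algebra

lemma rotation_cayley_hamilton:
  fixes c s x y :: real
  assumes "c\<^sup>2 + s\<^sup>2 = 1"
  shows "x - 2 * c * (c * x + s * y) + (c * (c * x + s * y) + s * (- s * x + c * y)) = 0"
    and "y - 2 * c * (- s * x + c * y) + (- s * (c * x + s * y) + c * (- s * x + c * y)) = 0"
  using assms by (algebra, algebra)

lemma aci_w_eq:
  "aci_w n M v0 k =
     (let y = (\<lambda>i. mvec n M (aci_v n M v0 k) i - aci_alpha n M v0 k * aci_v n M v0 k i)
      in (\<lambda>i. y i / vnorm n y))"
  by (cases k) (simp_all add: aci_v_def aci_w_def aci_alpha_def Let_def)

lemma aci_v_Suc:
  "aci_v n M v0 (Suc k) =
     (let y = (\<lambda>i. mvec n (mtrans M) (aci_w n M v0 k) i - aci_beta n M v0 k * aci_w n M v0 k i)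
      in (\<lambda>i. y i / vnorm n y))"
  by (simp add: aci_v_def aci_w_def aci_beta_def Let_def)

locale rotation_blocks =
  fixes m :: nat and t :: bool and c s :: "nat \<Rightarrow> real"
  assumes rot: "\<And>j. j < m \<Longrightarrow> (c j)\<^sup>2 + (s j)\<^sup>2 = 1"
begin

abbreviation "n \<equiv> dimA m t"
abbreviation "A \<equiv> rotA m t c s"

definition block_energy :: "(nat \<Rightarrow> real) \<Rightarrow> nat \<Rightarrow> real" where
  "block_energy x j =
     (if j < m then (x (2*j))\<^sup>2 + (x (Suc (2*j)))\<^sup>2 else if j = m \<and> t then (x (2*m))\<^sup>2 else 0)"

text \<open>Real part of the eigenvalues of block \<open>j\<close>; the value at \<open>m\<close> is also used when the trailing
  block is absent, where it is weighted by zero energy.\<close>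
definition block_re :: "nat \<Rightarrow> real" where
  "block_re j = (if j < m then c j else 1)"

lemma block_energy_nonneg: "0 \<le> block_energy x j"
  by (simp add: block_energy_def)

lemma sum_block_energy:
  "(\<Sum>j\<le>m. f j * block_energy x j) =
     (\<Sum>j<m. f j * ((x (2*j))\<^sup>2 + (x (Suc (2*j)))\<^sup>2)) + (if t then f m * (x (2*m))\<^sup>2 else 0)"
proof -
  have "(\<Sum>j<m. f j * block_energy x j) = (\<Sum>j<m. f j * ((x (2*j))\<^sup>2 + (x (Suc (2*j)))\<^sup>2))"
    by (intro sum.cong) (auto simp: block_energy_def)
  then show ?thesis
    by (simp add: lessThan_Suc_atMost[symmetric] block_energy_def)
qed

lemma vinner_self_eq: "vinner n x x = (\<Sum>j\<le>m. block_energy x j)"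
  using sum_block_energy[of "\<lambda>_. 1" x]
  by (simp add: vinner_def sum_lessThan_dimA power2_eq_square)

lemma vnorm_sq: "(vnorm n x)\<^sup>2 = (\<Sum>j\<le>m. block_energy x j)"
  by (simp add: vnorm_def vinner_self_eq sum_nonneg block_energy_nonneg)

lemma rayleigh_eq: "vinner n x (mvec n A x) = weighted_mean m block_re (block_energy x)"
proof -
  have "(\<Sum>j<m. x (2*j) * mvec n A x (2*j) + x (Suc (2*j)) * mvec n A x (Suc (2*j)))
      = (\<Sum>j<m. block_re j * ((x (2*j))\<^sup>2 + (x (Suc (2*j)))\<^sup>2))"
    by (intro sum.cong) (simp_all add: mvec_rotA_even mvec_rotA_odd block_re_def power2_eq_square ring_distribs)
  then show ?thesis
    by (simp add: vinner_def weighted_mean_def sum_lessThan_dimA sum_block_energy mvec_rotA_last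
        block_re_def power2_eq_square)
qed

lemma block_energy_shift:
  "block_energy (\<lambda>i. mvec n A x i - a * x i) j = shift_gain a (block_re j) * block_energy x j"
proof (cases "j < m")
  case True
  then show ?thesis
    using rotation_shift_sq[OF rot[OF True], of "x (2*j)" "x (Suc (2*j))" a]
    by (simp add: block_energy_def block_re_def mvec_rotA_even mvec_rotA_odd)
next
  case False
  then show ?thesis
    by (simp add: block_energy_def block_re_def mvec_rotA_last)
      (simp add: shift_gain_def power2_eq_square algebra_simps)
qed

lemma block_energy_shift_trans:
  "block_energy (\<lambda>i. mvec n (mtrans A) x i - a * x i) j = shift_gain a (block_re j) * block_energy x j"
proof (cases "j < m")
  case True
  then show ?thesis
    using rotation_shift_sq[of "c j" "- s j" "x (2*j)" "x (Suc (2*j))" a] rot[OF True]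
    by (simp add: block_energy_def block_re_def mvec_rotA_trans_even mvec_rotA_trans_odd)
next
  case False
  then show ?thesis
    by (simp add: block_energy_def block_re_def mvec_rotA_trans_last)
      (simp add: shift_gain_def power2_eq_square algebra_simps)
qed

lemma block_energy_scale: "block_energy (\<lambda>i. y i / r) j = block_energy y j / r\<^sup>2"
  by (simp add: block_energy_def power_divide add_divide_distrib)

lemma block_energy_normalize_shift:
  assumes gain: "\<And>j. block_energy y j = shift_gain a (block_re j) * block_energy x j"
    and a: "a = vinner n x (mvec n A x)"
  shows "block_energy (\<lambda>i. y i / vnorm n y) = reweight m block_re (block_energy x)"
proof
  fix j
  have "(vnorm n y)\<^sup>2 = (\<Sum>l\<le>m. shift_gain a (block_re l) * block_energy x l)"
    by (simp add: vnorm_sq gain)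
  then show "block_energy (\<lambda>i. y i / vnorm n y) j = reweight m block_re (block_energy x) j"
    by (simp add: block_energy_scale reweight_def a rayleigh_eq gain)
qed

definition aci_energy :: "(nat \<Rightarrow> real) \<Rightarrow> nat \<Rightarrow> nat \<Rightarrow> real" where
  "aci_energy v0 i = block_energy (if even i then aci_v n A v0 (i div 2) else aci_w n A v0 (i div 2))"

lemma aci_energy_Suc: "aci_energy v0 (Suc i) = reweight m block_re (aci_energy v0 i)"
proof (cases "even i")
  case True
  then show ?thesis
    unfolding aci_energy_def aci_w_eq Let_def
    by (simp add: block_energy_normalize_shift block_energy_shift aci_alpha_def)
next
  case False
  then have "Suc i div 2 = Suc (i div 2)"
    by presburger
  with False show ?thesis
    unfolding aci_energy_def
    by (simp add: aci_v_Suc Let_def block_energy_normalize_shift block_energy_shift_trans aci_beta_def)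
qed

lemma aci_alpha_eq: "aci_alpha n A v0 k = weighted_mean m block_re (aci_energy v0 (2*k))"
  by (simp add: aci_alpha_def aci_energy_def rayleigh_eq)

lemma aci_beta_eq: "aci_beta n A v0 k = weighted_mean m block_re (aci_energy v0 (Suc (2*k)))"
  by (simp add: aci_beta_def aci_energy_def rayleigh_eq)

lemma block_energy_eq_0_iff:
  "j < m \<Longrightarrow> block_energy x j = 0 \<longleftrightarrow> x (2*j) = 0 \<and> x (Suc (2*j)) = 0"
  "t \<Longrightarrow> block_energy x m = 0 \<longleftrightarrow> x (2*m) = 0"
  unfolding block_energy_def by (simp_all add: add_nonneg_eq_0_iff)

lemma grade_le_1:
  assumes "\<And>j. j < m \<Longrightarrow> block_energy x j = 0"
  shows "grade n A x \<le> 1"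
proof -
  have "annihilates n [:-1, 1:] A x"
    unfolding annihilates_def
  proof (intro allI impI)
    fix i
    assume "i < n"
    then show "poly_mvec n [:-1, 1:] A x i = 0"
      using assms block_energy_eq_0_iff
      by (cases rule: dimA_indexE) (simp_all add: poly_mvec_degree_le_2 coeff_pCons_2 mvec_rotA_even mvec_rotA_odd mvec_rotA_last)
  qed
  from grade_le[OF _ this] show ?thesis
    by simp
qed

lemma annihilates_block_charpoly:
  assumes j0: "j0 < m" and other: "\<And>j. j \<noteq> j0 \<Longrightarrow> block_energy x j = 0"
  shows "annihilates n [:1, -2 * c j0, 1:] A x"
  unfolding annihilates_def
proof (intro allI impI)
  have r: "(c j0)\<^sup>2 + (s j0)\<^sup>2 = 1"
    using rot[OF j0] .
  have zero: "x (2*j) = 0" "x (Suc (2*j)) = 0" if "j < m" "j \<noteq> j0" for j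
    using other[of j] that block_energy_eq_0_iff by auto
  have zero_last: "x (2*m) = 0" if t
    using other[of m] j0 that block_energy_eq_0_iff by auto
  fix i
  assume "i < n"
  then show "poly_mvec n [:1, -2 * c j0, 1:] A x i = 0"
  proof (cases rule: dimA_indexE)
    case (1 j)
    then show ?thesis
      using zero[of j] rotation_cayley_hamilton[OF r, where x = "x (2*j0)" and y = "x (Suc (2*j0))"]
      by (cases "j = j0") (simp_all add: poly_mvec_degree_le_2 coeff_pCons_2 mvec_rotA_even mvec_rotA_odd)
  next
    case (2 j)
    then show ?thesis
      using zero[of j] rotation_cayley_hamilton[OF r, where x = "x (2*j0)" and y = "x (Suc (2*j0))"]
      by (cases "j = j0") (simp_all add: poly_mvec_degree_le_2 coeff_pCons_2 mvec_rotA_even mvec_rotA_odd)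
  next
    case 3
    then show ?thesis
      by (simp add: poly_mvec_degree_le_2 coeff_pCons_2 mvec_rotA_last zero_last)
  qed
qed

lemma not_annihilates_degree_le_1:
  assumes j0: "j0 < m" and s: "s j0 \<noteq> 0" and E: "block_energy x j0 \<noteq> 0"
    and q: "lead_coeff q = 1" "degree q \<le> 1"
  shows "\<not> annihilates n q A x"
proof
  assume "annihilates n q A x"
  moreover have "2*j0 < n" "Suc (2*j0) < n"
    using j0 by (auto simp: dimA_def)
  ultimately have "poly_mvec n q A x (2*j0) = 0" "poly_mvec n q A x (Suc (2*j0)) = 0"
    by (auto simp: annihilates_def)
  moreover have "coeff q 2 = 0"
    using q by (simp add: coeff_eq_0)
  ultimately have
    e0: "coeff q 0 * x (2*j0) + coeff q 1 * (c j0 * x (2*j0) + s j0 * x (Suc (2*j0))) = 0" and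
    e1: "coeff q 0 * x (Suc (2*j0)) + coeff q 1 * (- s j0 * x (2*j0) + c j0 * x (Suc (2*j0))) = 0"
    using q by (simp_all add: poly_mvec_degree_le_2 mvec_rotA_even mvec_rotA_odd j0)
  have "coeff q 1 * s j0 * block_energy x j0 =
      x (Suc (2*j0)) * (coeff q 0 * x (2*j0) + coeff q 1 * (c j0 * x (2*j0) + s j0 * x (Suc (2*j0))))
      - x (2*j0) * (coeff q 0 * x (Suc (2*j0)) + coeff q 1 * (- s j0 * x (2*j0) + c j0 * x (Suc (2*j0))))"
    using j0 by (simp add: block_energy_def power2_eq_square algebra_simps)
  then have "coeff q 1 = 0"
    using e0 e1 s E by simp
  then have "degree q = 0" and "coeff q 0 = 1"
    using q by (auto simp: le_Suc_eq)
  then have "block_energy x j0 = 0"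
    using e0 e1 \<open>coeff q 1 = 0\<close> block_energy_eq_0_iff(1)[OF j0] by simp
  with E show False ..
qed

lemma grade_eq_2:
  assumes "j0 < m" "s j0 \<noteq> 0" "block_energy x j0 \<noteq> 0" "\<And>j. j \<noteq> j0 \<Longrightarrow> block_energy x j = 0"
  shows "grade n A x = 2"
  using grade_eqI[of "[:1, -2 * c j0, 1:]" n A x] annihilates_block_charpoly[OF assms(1,4)]
    not_annihilates_degree_le_1[OF assms(1-3)]
  by simp

lemma block_energy_tendsto:
  assumes "\<forall>i<n. (\<lambda>k. X k i) \<longlonglongrightarrow> y i"
  shows "(\<lambda>k. block_energy (X k) j) \<longlonglongrightarrow> block_energy y j"
  using assms unfolding block_energy_def
  by (auto simp: dimA_def intro!: tendsto_intros)

end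

locale ordered_rotation_blocks = rotation_blocks +
  assumes snz: "\<And>j. j < m \<Longrightarrow> s j \<noteq> 0"
    and cpos: "0 < m \<Longrightarrow> 0 < c 0"
    and cinc: "\<And>i j. i < j \<Longrightarrow> j < m \<Longrightarrow> c i < c j"
begin

lemma c_lt_1: "j < m \<Longrightarrow> c j < 1"
  using rot[of j] snz[of j] abs_square_less_1[of "c j"]
  by (smt (verit) zero_less_power2)

sublocale reweighting m block_re
proof
  show "0 < block_re 0"
    using cpos by (simp add: block_re_def)
  show "block_re i < block_re j" if "i < j" "j \<le> m" for i j
    using that cinc c_lt_1 by (auto simp: block_re_def)
  show "block_re m \<le> 1"
    by (simp add: block_re_def)
qed

lemma aci_energy_tendsto:
  assumes unit: "vnorm n v0 = 1" and grade: "2 \<le> grade n A v0"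
  obtains j0 where "j0 < m" "\<And>j. j \<le> m \<Longrightarrow> (\<lambda>i. aci_energy v0 i j) \<longlonglongrightarrow> (if j = j0 then 1 else 0)"
proof -
  have ex: "\<exists>j. j < m \<and> block_energy v0 j \<noteq> 0"
    using grade_le_1[of v0] grade by fastforce
  define j0 where "j0 = (LEAST j. j < m \<and> block_energy v0 j \<noteq> 0)"
  have j0: "j0 < m" "block_energy v0 j0 \<noteq> 0"
    using LeastI_ex[OF ex] unfolding j0_def by auto
  have below: "block_energy v0 j = 0" if "j < j0" for j
    using not_less_Least[OF that[unfolded j0_def]] that j0(1) by auto
  have "(\<Sum>j\<le>m. block_energy v0 j) = 1"
    using unit by (simp add: vnorm_def vinner_self_eq[symmetric])
  then have "supported_from j0 (aci_energy v0 0)"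
    using j0 below block_energy_nonneg[of v0]
    by (simp add: supported_from_def aci_energy_def aci_v_def Let_def less_le)
  then show thesis
    by (rule that[OF j0(1) reweight_iterates_tendsto[where P = "aci_energy v0", OF aci_energy_Suc _ j0(1)]])
qed

lemma aci_limit_grade:
  assumes j0: "j0 < m"
    and E: "\<And>j. j \<le> m \<Longrightarrow> (\<lambda>i. aci_energy v0 i j) \<longlonglongrightarrow> (if j = j0 then 1 else 0)"
    and r: "strict_mono r" and lim: "\<forall>i<n. (\<lambda>k. aci_v n A v0 (r k) i) \<longlonglongrightarrow> vs i"
  shows "grade n A vs = 2"
proof -
  have "block_energy vs j = (if j = j0 then 1 else 0)" if "j \<le> m" for j
  proof (rule LIMSEQ_unique)
    have "strict_mono (\<lambda>k. 2 * r k)"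
      using r by (simp add: strict_mono_def)
    from LIMSEQ_subseq_LIMSEQ[OF E[OF that] this]
    show "(\<lambda>k. block_energy (aci_v n A v0 (r k)) j) \<longlonglongrightarrow> (if j = j0 then 1 else 0)"
      by (simp add: o_def aci_energy_def)
    show "(\<lambda>k. block_energy (aci_v n A v0 (r k)) j) \<longlonglongrightarrow> block_energy vs j"
      using lim by (rule block_energy_tendsto)
  qed
  moreover have "block_energy vs j = 0" if "m < j" for j
    using that by (simp add: block_energy_def)
  ultimately have "block_energy vs j = (if j = j0 then 1 else 0)" for j
    using j0 by (cases "j \<le> m") auto
  then show ?thesis
    by (intro grade_eq_2[OF j0 snz[OF j0]]) auto
qed

end

theorem lemma4p4:
  fixes m :: nat and t :: bool and c s :: "nat \<Rightarrow> real" and v0 :: "nat \<Rightarrow> real"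
  defines "n \<equiv> dimA m t" and "A \<equiv> rotA m t c s"
  assumes rot: "\<And>j. j < m \<Longrightarrow> (c j)\<^sup>2 + (s j)\<^sup>2 = 1"
    and snz: "\<And>j. j < m \<Longrightarrow> s j \<noteq> 0"
    and cpos: "0 < m \<Longrightarrow> 0 < c 0"
    and cinc: "\<And>i j. i < j \<Longrightarrow> j < m \<Longrightarrow> c i < c j"
    and unit: "vnorm n v0 = 1"
    and grade0: "grade n A v0 \<ge> 2"
  shows "\<exists>\<alpha> \<beta>. (aci_alpha n A v0 \<longlonglongrightarrow> \<alpha>) \<and> (aci_beta n A v0 \<longlonglongrightarrow> \<beta>) \<and>
           \<alpha> = \<beta> \<and> (\<exists>j<m. \<alpha> = c j) \<and>
           (\<forall>vs r. strict_mono r \<and> (\<forall>i<n. (\<lambda>k. aci_v n A v0 (r k) i) \<longlonglongrightarrow> vs i)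
                 \<longrightarrow> grade n A vs = 2)"
proof -
  interpret ordered_rotation_blocks m t c s
    using rot snz cpos cinc by unfold_locales
  obtain j0 where j0: "j0 < m"
    and E: "\<And>j. j \<le> m \<Longrightarrow> (\<lambda>i. aci_energy v0 i j) \<longlonglongrightarrow> (if j = j0 then 1 else 0)"
    using aci_energy_tendsto unit grade0 unfolding n_def A_def by blast
  have mean: "(\<lambda>i. weighted_mean m block_re (aci_energy v0 i)) \<longlonglongrightarrow> c j0"
    using weighted_mean_tendsto[where m = m and \<gamma> = block_re, OF _ E] j0 by (simp add: block_re_def)
  have "aci_alpha n A v0 \<longlonglongrightarrow> c j0"
    using LIMSEQ_subseq_LIMSEQ[OF mean, of "\<lambda>k. 2 * k"]
    by (simp add: n_def A_def aci_alpha_eq[abs_def] o_def strict_mono_def)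
  moreover have "aci_beta n A v0 \<longlonglongrightarrow> c j0"
    using LIMSEQ_subseq_LIMSEQ[OF mean, of "\<lambda>k. Suc (2 * k)"]
    by (simp add: n_def A_def aci_beta_eq[abs_def] o_def strict_mono_def)
  ultimately show ?thesis
    using j0 aci_limit_grade[OF j0 E] unfolding n_def A_def by blast
qed

end
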